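(* Consider the adaptive experiment described in the context, with truncated propensities $\pi_t(a\mid X_t,\Omega_{t-1})\in[1/k_t,1-1/k_t]$. Assume: $\mathrm{Var}(Y_t)<\infty$; $v(a,x)<\infty$ for all $a\in\{0,1\}$, $x\in\mathcal{X}$; $k_t\lVert\hat f_t-f\rVert_2=o_{\mathbb{P}}(1)$; $k_t\lVert\pi_t-\pi\rVert_2=o_{\mathbb{P}}(1)$ for some policy $\pi$ with $1/\pi(a\mid x)<\infty$; $1/\pi^{\mathrm{AIPW}}<C_1$ for some constant $C_1<\infty$; and $\mathrm{Var}(\hat f_{t-1}(a,X_t))<\infty$ for $a\in\{0,1\}$. Then, as $t\to\infty$, $$2\, \mathbb{E} \left[ \left(f(1,X_t) - f(0,X_t) - \hat{f}_{t-1}(1,X_t) + \hat{f}_{t-1}(0,X_t) \right) \left(\hat{f}_{t-1}(1,X_t) - \hat{f}_{t-1}(0,X_t) -\theta_0 \right) ~\Big|~\Omega_{t-1}\right]= o_{\mathbb{P}}(1).$$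
   Context: Data-generating process: subjects $t=1,2,\dots$ arrive sequentially. The tuples $(X_t, Y_t(0), Y_t(1))$, $X_t\in\mathcal{X}$, are i.i.d. over $t$. Let $\Omega_{t-1}=\{(X_s,A_s,Y_s): s\le t-1\}$ be the history. Given $X_t$ and $\Omega_{t-1}$, the treatment $A_t\in\{0,1\}$ is drawn with $\mathbb{P}(A_t=1\mid X_t,\Omega_{t-1})=\pi_t(1\mid X_t,\Omega_{t-1})$, independently of the current potential outcomes; $Y_t = \mathbb{1}[A_t=0]Y_t(0)+\mathbb{1}[A_t=1]Y_t(1)$. The policies are $\pi_t=(\tilde\pi_t\vee 1/k_t)\wedge(1-1/k_t)$ for arbitrary $(0,1)$-valued policies $\tilde\pi_t$ and user-chosen $k_t\in[2,\infty)$. $f(a,x)=\mathbb{E}[Y_t(a)\mid X_t=x]$, $v(a,x)=\mathrm{Var}(Y_t(a)\mid X_t=x)$, $\theta_0=\mathbb{E}[Y(1)-Y(0)]$; $\hat f_t$ is an estimator of $f$ built from $\Omega_t$; $\lVert g\rVert_2^2=\int g(x)^2d\mathbb{P}(x)$. $\pi^{\mathrm{AIPW}}(1\mid x)=\frac{\sqrt{v(1,x)}}{\sqrt{v(1,x)}+\sqrt{v(0,x)}}$, $\pi^{\mathrm{AIPW}}(0\mid x)=1-\pi^{\mathrm{AIPW}}(1\mid x)$. *)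

theory Defs
  imports "HOL-Probability.Probability"
begin

definition preimgs :: "'a measure \<Rightarrow> 'b measure \<Rightarrow> ('a \<Rightarrow> 'b) \<Rightarrow> 'a set set" where
  "preimgs M N g = {g -` B \<inter> space M | B. B \<in> sets N}"

definition ypot :: "(nat \<Rightarrow> 'a \<Rightarrow> real) \<Rightarrow> (nat \<Rightarrow> 'a \<Rightarrow> real) \<Rightarrow> bool \<Rightarrow> nat \<Rightarrow> 'a \<Rightarrow> real" where
  "ypot Y0 Y1 a t \<omega> = (if a then Y1 t \<omega> else Y0 t \<omega>)"

definition yobs :: "(nat \<Rightarrow> 'a \<Rightarrow> bool) \<Rightarrow> (nat \<Rightarrow> 'a \<Rightarrow> real) \<Rightarrow> (nat \<Rightarrow> 'a \<Rightarrow> real) \<Rightarrow> nat \<Rightarrow> 'a \<Rightarrow> real" where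
  "yobs A Y0 Y1 t \<omega> = (if A t \<omega> then Y1 t \<omega> else Y0 t \<omega>)"

text \<open>History sigma-algebra Omega_t generated by (X_s, A_s, Y_s), 1 <= s <= t
  (subjects are indexed from 1; Omega_0 is trivial).\<close>
definition hist :: "'a measure \<Rightarrow> 'x measure \<Rightarrow> (nat \<Rightarrow> 'a \<Rightarrow> 'x) \<Rightarrow> (nat \<Rightarrow> 'a \<Rightarrow> bool)
    \<Rightarrow> (nat \<Rightarrow> 'a \<Rightarrow> real) \<Rightarrow> (nat \<Rightarrow> 'a \<Rightarrow> real) \<Rightarrow> nat \<Rightarrow> 'a measure" where
  "hist M MX X A Y0 Y1 t = sigma (space M)
     (\<Union>s\<in>{1..t}. preimgs M MX (X s) \<union> preimgs M (count_space UNIV) (A s)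
                 \<union> preimgs M borel (yobs A Y0 Y1 s))"

definition propalg :: "'a measure \<Rightarrow> 'x measure \<Rightarrow> (nat \<Rightarrow> 'a \<Rightarrow> 'x) \<Rightarrow> (nat \<Rightarrow> 'a \<Rightarrow> bool)
    \<Rightarrow> (nat \<Rightarrow> 'a \<Rightarrow> real) \<Rightarrow> (nat \<Rightarrow> 'a \<Rightarrow> real) \<Rightarrow> nat \<Rightarrow> 'a measure" where
  "propalg M MX X A Y0 Y1 t = sigma (space M)
     (sets (hist M MX X A Y0 Y1 (t - 1)) \<union> preimgs M MX (X t)
       \<union> preimgs M borel (Y0 t) \<union> preimgs M borel (Y1 t))"

definition trunc :: "real \<Rightarrow> real \<Rightarrow> real" where
  "trunc k p = min (max p (1 / k)) (1 - 1 / k)"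

definition l2norm :: "'x measure \<Rightarrow> ('x \<Rightarrow> real) \<Rightarrow> real" where
  "l2norm P g = sqrt (integral\<^sup>L P (\<lambda>x. (g x)\<^sup>2))"

definition conv_in_prob :: "'a measure \<Rightarrow> (nat \<Rightarrow> 'a \<Rightarrow> real) \<Rightarrow> bool" where
  "conv_in_prob M Z \<longleftrightarrow> (\<forall>t. Z t \<in> borel_measurable M) \<and>
     (\<forall>e>0. (\<lambda>t. measure M {\<omega> \<in> space M. e < \<bar>Z t \<omega>\<bar>}) \<longlonglongrightarrow> 0)"

definition aipw :: "(bool \<Rightarrow> 'x \<Rightarrow> real) \<Rightarrow> bool \<Rightarrow> 'x \<Rightarrow> real" where
  "aipw v a x = (if a then sqrt (v True x) / (sqrt (v True x) + sqrt (v False x))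
                 else 1 - sqrt (v True x) / (sqrt (v True x) + sqrt (v False x)))"

end

theory Submission
  imports Defs
begin

text \<open>
  Because \<open>X\<^sub>t\<^sub>+\<^sub>1\<close> is independent of the history \<open>\<Omega>\<^sub>t\<close> and \<open>fhat\<^sub>t\<close> is
  \<open>\<Omega>\<^sub>t\<close>-measurable, the conditional expectation is the integral over the covariate law
  \<open>P\<^sub>X\<close> of the integrand with \<open>fhat\<^sub>t\<close> frozen. With
  \<open>D = (fhat\<^sub>t(1,.) - f(1,.)) - (fhat\<^sub>t(0,.) - f(0,.))\<close> the integrand is
  \<open>-D\<^sup>2 - D (f(1,.) - f(0,.) - \<theta>\<^sub>0)\<close>, so a weighted AM-GM inequality bounds it, for every
  \<open>s > 0\<close>, by \<open>(2 + 1/(2s)) \<Sum>\<^sub>a \<parallel>fhat\<^sub>t(a,.) - f(a,.)\<parallel>\<^sup>2 + s \<parallel>f(1,.) - f(0,.) - \<theta>\<^sub>0\<parallel>\<^sup>2\<close>.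
  The first term is \<open>o\<^sub>P(1)\<close> by the rate hypothesis, as \<open>k\<^sub>t \<ge> 1\<close>. The second is finite, hence
  negligible as \<open>s \<rightarrow> 0\<close>: \<open>f(a,X) = E[Y(a)|X]\<close> is square integrable by conditional Jensen,
  and \<open>Y(a)\<close> is because the observed outcome is and, given the potential outcomes, each arm is
  drawn with probability at least \<open>1/k\<^sub>1\<close>.
\<close>

lemma subalgebra_sigma:
  assumes "G \<subseteq> sets M"
  shows "subalgebra M (sigma (space M) G)"
proof -
  have "G \<subseteq> Pow (space M)" using assms sets.sets_into_space by blast
  then show ?thesis using assms
    by (simp add: subalgebra_def sets_measure_of sets.sigma_sets_subset)
qed

lemma measurable_sigma_preimgs:
  assumes "g \<in> M \<rightarrow>\<^sub>M N" "preimgs M N g \<subseteq> G" "G \<subseteq> Pow (space M)"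
  shows "g \<in> sigma (space M) G \<rightarrow>\<^sub>M N"
proof (rule measurableI)
  fix x assume "x \<in> space (sigma (space M) G)"
  then show "g x \<in> space N" using measurable_space[OF assms(1)] assms(3) by (simp add: space_measure_of_conv)
next
  fix B assume "B \<in> sets N"
  then have "g -` B \<inter> space M \<in> G" using assms(2) by (auto simp: preimgs_def)
  then show "g -` B \<inter> space (sigma (space M) G) \<in> sets (sigma (space M) G)"
    using assms(3) by (simp add: space_measure_of_conv sets_measure_of sigma_sets.Basic)
qed

lemma preimgs_comp_subset:
  assumes "g \<in> M \<rightarrow>\<^sub>M N" "h \<in> N \<rightarrow>\<^sub>M K"
  shows "preimgs M K (\<lambda>x. h (g x)) \<subseteq> preimgs M N g"
proof
  fix E assume "E \<in> preimgs M K (\<lambda>x. h (g x))"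
  then obtain B where B: "B \<in> sets K" and E: "E = (\<lambda>x. h (g x)) -` B \<inter> space M"
    by (auto simp: preimgs_def)
  have "h -` B \<inter> space N \<in> sets N" using assms(2) B by (rule measurable_sets)
  moreover have "E = g -` (h -` B \<inter> space N) \<inter> space M" using measurable_space[OF assms(1)] E by auto
  ultimately show "E \<in> preimgs M N g" unfolding preimgs_def by blast
qed

lemma measurable_id_subalgebra:
  assumes "subalgebra M H"
  shows "(\<lambda>x. x) \<in> M \<rightarrow>\<^sub>M H"
  using assms by (intro measurableI) (auto simp: subalgebra_def dest: sets.sets_into_space)

lemma (in prob_space) sigma_finite_subalgebra_of_subalgebra:
  "subalgebra M F \<Longrightarrow> sigma_finite_subalgebra M F"
  by (intro finite_measure_subalgebra_is_sigma_finite finite_measure_subalgebra.intro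
      finite_measure_subalgebra_axioms.intro finite_measure_axioms)

lemma (in prob_space) distr_pair_eq_pair_measure_if_indep:
  assumes H: "subalgebra M H" and Z: "Z \<in> M \<rightarrow>\<^sub>M N"
    and ind: "indep_set (sets H) (preimgs M N Z)"
  shows "distr M (H \<Otimes>\<^sub>M N) (\<lambda>x. (x, Z x)) = distr M H (\<lambda>x. x) \<Otimes>\<^sub>M distr M N Z"
proof (rule pair_measure_eqI[symmetric])
  have idm: "(\<lambda>x. x) \<in> M \<rightarrow>\<^sub>M H" by (rule measurable_id_subalgebra[OF H])
  interpret PH: prob_space "distr M H (\<lambda>x. x)" by (rule prob_space_distr[OF idm])
  interpret PN: prob_space "distr M N Z" by (rule prob_space_distr[OF Z])
  show "sigma_finite_measure (distr M H (\<lambda>x. x))" "sigma_finite_measure (distr M N Z)"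
    by unfold_locales
  show "sets (distr M H (\<lambda>x. x) \<Otimes>\<^sub>M distr M N Z) = sets (distr M (H \<Otimes>\<^sub>M N) (\<lambda>x. (x, Z x)))"
    by (simp cong: sets_pair_measure_cong)
  fix C B assume "C \<in> sets (distr M H (\<lambda>x. x))" "B \<in> sets (distr M N Z)"
  then have C: "C \<in> sets H" and B: "B \<in> sets N" by simp_all
  have "C \<subseteq> space M" using C H sets.sets_into_space[OF C] by (auto simp: subalgebra_def)
  then have pre: "(\<lambda>x. (x, Z x)) -` (C \<times> B) \<inter> space M = C \<inter> (Z -` B \<inter> space M)" by auto
  have "prob (C \<inter> (Z -` B \<inter> space M)) = prob C * prob (Z -` B \<inter> space M)"
    using ind C B by (intro indep_setD) (auto simp: preimgs_def)
  then show "emeasure (distr M H (\<lambda>x. x)) C * emeasure (distr M N Z) B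
      = emeasure (distr M (H \<Otimes>\<^sub>M N) (\<lambda>x. (x, Z x))) (C \<times> B)"
    using C B idm Z H \<open>C \<subseteq> space M\<close>
    by (simp add: emeasure_distr pre measurable_Pair Int_absorb2 emeasure_eq_measure ennreal_mult)
qed

lemma (in prob_space) real_cond_exp_indep_eq_integral:
  assumes H: "subalgebra M H" and Z[measurable]: "Z \<in> M \<rightarrow>\<^sub>M N"
    and ind: "indep_set (sets H) (preimgs M N Z)"
    and [measurable]: "(\<lambda>(x, z). g x z) \<in> borel_measurable (H \<Otimes>\<^sub>M N)"
    and int: "integrable M (\<lambda>x. g x (Z x))"
  shows "AE x in M. real_cond_exp M H (\<lambda>x. g x (Z x)) x = (\<integral>z. g x z \<partial>distr M N Z)"
    and "AE x in M. integrable (distr M N Z) (g x)"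
proof -
  let ?PH = "distr M H (\<lambda>x. x)" and ?PN = "distr M N Z"
  have idm: "(\<lambda>x. x) \<in> M \<rightarrow>\<^sub>M H" by (rule measurable_id_subalgebra[OF H])
  have pm: "(\<lambda>x. (x, Z x)) \<in> M \<rightarrow>\<^sub>M H \<Otimes>\<^sub>M N" by (rule measurable_Pair[OF idm Z])
  interpret PH: prob_space ?PH by (rule prob_space_distr[OF idm])
  interpret PN: prob_space ?PN by (rule prob_space_distr[OF Z])
  interpret P: pair_sigma_finite ?PH ?PN by unfold_locales
  interpret S: sigma_finite_subalgebra M H by (rule sigma_finite_subalgebra_of_subalgebra[OF H])
  note joint = distr_pair_eq_pair_measure_if_indep[OF H Z ind]
  have gint: "integrable (?PH \<Otimes>\<^sub>M ?PN) (\<lambda>(x, z). g x z)"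
    unfolding joint[symmetric] using int by (subst integrable_distr_eq[OF pm]) simp_all
  show "AE x in M. integrable ?PN (g x)"
    using AE_distrD[OF idm P.AE_integrable_fst[OF gint]] by simp
  define G where "G x = (\<integral>z. g x z \<partial>?PN)" for x
  have Gm[measurable]: "G \<in> borel_measurable H"
    unfolding G_def by (rule PN.borel_measurable_lebesgue_integral) simp
  have "integrable ?PH G"
    unfolding G_def by (rule P.integrable_fst[OF gint])
  then have Gint: "integrable M G"
    by (subst (asm) integrable_distr_eq[OF idm]) simp_all
  show "AE x in M. real_cond_exp M H (\<lambda>x. g x (Z x)) x = (\<integral>z. g x z \<partial>?PN)"
    unfolding G_def[symmetric]
  proof (rule S.real_cond_exp_charact[OF _ int Gint Gm])
    fix C assume C[measurable]: "C \<in> sets H"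
    have gCint: "integrable (?PH \<Otimes>\<^sub>M ?PN) (\<lambda>(x, z). indicator C x * g x z)"
    proof (rule Bochner_Integration.integrable_cong[OF refl, THEN iffD1])
      show "integrable (?PH \<Otimes>\<^sub>M ?PN) (\<lambda>p. indicator (C \<times> space ?PN) p *\<^sub>R (case p of (x, z) \<Rightarrow> g x z))"
        by (intro integrable_mult_indicator gint pair_measureI) simp_all
    qed (auto simp: space_pair_measure indicator_def)
    have "(\<integral>x\<in>C. g x (Z x) \<partial>M)
        = (\<integral>p. (\<lambda>(x, z). indicator C x * g x z) p \<partial>distr M (H \<Otimes>\<^sub>M N) (\<lambda>x. (x, Z x)))"
      unfolding set_lebesgue_integral_def by (subst integral_distr[OF pm]) simp_all
    also have "\<dots> = (\<integral>x. (\<integral>z. indicator C x * g x z \<partial>?PN) \<partial>?PH)"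
      unfolding joint using P.integral_fst[OF gCint] by simp
    also have "\<dots> = (\<integral>x. indicator C x * G x \<partial>M)"
      unfolding G_def by (subst integral_distr[OF idm]) simp_all
    finally show "(\<integral>x\<in>C. g x (Z x) \<partial>M) = (\<integral>x\<in>C. G x \<partial>M)"
      unfolding set_lebesgue_integral_def by simp
  qed
qed

lemma (in sigma_finite_subalgebra) integrable_square_if_cond_exp_weight_ge:
  fixes Y w :: "'a \<Rightarrow> real"
  assumes Y[measurable]: "Y \<in> borel_measurable F" and [measurable]: "w \<in> borel_measurable M"
    and w_nonneg: "\<And>x. 0 \<le> w x" and c: "0 < c"
    and lower: "AE x in M. c \<le> real_cond_exp M F w x"
    and int: "integrable M (\<lambda>x. w x * (Y x)\<^sup>2)"
  shows "integrable M (\<lambda>x. (Y x)\<^sup>2)"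
proof -
  have [measurable]: "Y \<in> borel_measurable M" by (rule measurable_from_subalg[OF subalg Y])
  have enn: "ennreal c \<le> N" if "c \<le> enn2real N" for N :: ennreal
    using that c by (cases N rule: ennreal_cases) (auto intro: ennreal_leI)
  have "AE x in M. nn_cond_exp M F (\<lambda>x. ennreal (- w x)) x = 0"
    using nn_cond_exp_F_meas[of "\<lambda>_. 0"] w_nonneg by (simp add: ennreal_neg)
  then have ge: "AE x in M. ennreal c \<le> nn_cond_exp M F (\<lambda>x. ennreal (w x)) x"
    using lower by eventually_elim (simp add: real_cond_exp_def enn)
  \<comment> \<open>\<open>E[Y\<^sup>2 w] = E[Y\<^sup>2 E[w|F]] \<ge> c E[Y\<^sup>2]\<close>, computed with non-negative integrals so that
    integrability of \<open>Y\<^sup>2\<close> is not presupposed\<close>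
  have "ennreal c * (\<integral>\<^sup>+x. ennreal ((Y x)\<^sup>2) \<partial>M)
      = (\<integral>\<^sup>+x. ennreal ((Y x)\<^sup>2) * ennreal c \<partial>M)"
    by (simp add: nn_integral_cmult mult.commute)
  also have "\<dots> \<le> (\<integral>\<^sup>+x. ennreal ((Y x)\<^sup>2) * nn_cond_exp M F (\<lambda>x. ennreal (w x)) x \<partial>M)"
    using ge by (intro nn_integral_mono_AE, eventually_elim) (simp add: mult_left_mono)
  also have "\<dots> = (\<integral>\<^sup>+x. ennreal ((Y x)\<^sup>2) * ennreal (w x) \<partial>M)"
    by (rule nn_cond_exp_intg) simp_all
  also have "\<dots> = (\<integral>\<^sup>+x. ennreal (norm (w x * (Y x)\<^sup>2)) \<partial>M)"
    using w_nonneg by (intro nn_integral_cong) (simp add: ennreal_mult abs_mult mult.commute)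
  also have "\<dots> < \<infinity>" using int by (simp add: integrable_iff_bounded)
  finally have "(\<integral>\<^sup>+x. ennreal (norm ((Y x)\<^sup>2)) \<partial>M) < \<infinity>"
    using c by (auto simp: ennreal_mult_less_top top.not_eq_extremum)
  then show ?thesis by (intro integrableI_bounded) simp_all
qed

lemma (in prob_space) integrable_square_potential_outcomes:
  fixes Y0 Y1 :: "'a \<Rightarrow> real" and A :: "'a \<Rightarrow> bool"
  assumes F: "subalgebra M F" and [measurable]: "Y0 \<in> borel_measurable F" "Y1 \<in> borel_measurable F"
    and [measurable]: "A \<in> M \<rightarrow>\<^sub>M count_space UNIV" and c: "0 < c"
    and positivity: "AE x in M. c \<le> real_cond_exp M F (\<lambda>x. if A x then 1 else 0) x
                               \<and> real_cond_exp M F (\<lambda>x. if A x then 1 else 0) x \<le> 1 - c"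
    and int: "integrable M (\<lambda>x. (if A x then Y1 x else Y0 x)\<^sup>2)"
  shows "integrable M (\<lambda>x. (Y0 x)\<^sup>2)" "integrable M (\<lambda>x. (Y1 x)\<^sup>2)"
proof -
  interpret S: sigma_finite_subalgebra M F by (rule sigma_finite_subalgebra_of_subalgebra[OF F])
  have [measurable]: "Y0 \<in> borel_measurable M" "Y1 \<in> borel_measurable M"
    by (rule measurable_from_subalg[OF F], measurable)+
  let ?e = "\<lambda>x. if A x then 1 else 0 :: real"
  have int_one: "integrable M (\<lambda>_. 1::real)" by simp
  have int_e: "integrable M ?e"
    by (rule Bochner_Integration.integrable_bound[OF int_one]) (simp_all add: AE_I2)
  have "AE x in M. real_cond_exp M F (\<lambda>_. 1) x = 1"
    by (rule S.real_cond_exp_F_meas[OF int_one]) simp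
  then have "AE x in M. real_cond_exp M F (\<lambda>x. 1 - ?e x) x = 1 - real_cond_exp M F ?e x"
    using S.real_cond_exp_diff[OF int_one int_e] by eventually_elim simp
  then have lower0: "AE x in M. c \<le> real_cond_exp M F (\<lambda>x. 1 - ?e x) x"
    using positivity by eventually_elim simp
  have lower1: "AE x in M. c \<le> real_cond_exp M F ?e x"
    using positivity by eventually_elim simp
  have dominated: "integrable M (\<lambda>x. w x * (Y x)\<^sup>2)"
    if [measurable]: "w \<in> borel_measurable M" "Y \<in> borel_measurable M"
      and "\<And>x. 0 \<le> w x * (Y x)\<^sup>2 \<and> w x * (Y x)\<^sup>2 \<le> (if A x then Y1 x else Y0 x)\<^sup>2" for w Y
    using that(3) by (intro Bochner_Integration.integrable_bound[OF int]) (auto simp: abs_of_nonneg)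
  show "integrable M (\<lambda>x. (Y0 x)\<^sup>2)"
    by (rule S.integrable_square_if_cond_exp_weight_ge[OF _ _ _ c lower0 dominated]) simp_all
  show "integrable M (\<lambda>x. (Y1 x)\<^sup>2)"
    by (rule S.integrable_square_if_cond_exp_weight_ge[OF _ _ _ c lower1 dominated]) simp_all
qed

lemma (in prob_space) integrable_square_regression:
  assumes Z: "Z \<in> M \<rightarrow>\<^sub>M N" and [measurable]: "g \<in> borel_measurable N"
    and Y[measurable]: "Y \<in> borel_measurable M" and Y_sq: "integrable M (\<lambda>x. (Y x)\<^sup>2)"
    and regression: "AE x in M. real_cond_exp M (vimage_algebra (space M) Z N) Y x = g (Z x)"
  shows "integrable (distr M N Z) (\<lambda>z. (g z)\<^sup>2)"
proof -
  have "subalgebra M (vimage_algebra (space M) Z N)"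
    using Z by (auto simp: subalgebra_def sets_vimage_algebra2 measurable_space measurable_sets)
  then interpret S: sigma_finite_subalgebra M "vimage_algebra (space M) Z N"
    by (rule sigma_finite_subalgebra_of_subalgebra)
  have "integrable M (\<lambda>x. (real_cond_exp M (vimage_algebra (space M) Z N) Y x)\<^sup>2)"
    using square_integrable_imp_integrable[OF Y Y_sq] Y_sq
    by (intro S.integrable_convex_cond_exp[where I=UNIV]) (simp_all add: convex_power2)
  then have "integrable M (\<lambda>x. (g (Z x))\<^sup>2)"
    using regression Z by (subst integrable_cong_AE) (auto elim!: AE_mp)
  then show ?thesis using Z by (subst integrable_distr_eq) simp_all
qed

lemma integrable_square_add:
  fixes u v :: "'a \<Rightarrow> real"
  assumes [measurable]: "u \<in> borel_measurable M" "v \<in> borel_measurable M"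
    and "integrable M (\<lambda>x. (u x)\<^sup>2)" "integrable M (\<lambda>x. (v x)\<^sup>2)"
  shows "integrable M (\<lambda>x. (u x + v x)\<^sup>2)"
proof (rule Bochner_Integration.integrable_bound)
  show "integrable M (\<lambda>x. 2 * (u x)\<^sup>2 + 2 * (v x)\<^sup>2)" using assms(3,4) by simp
  have "(u x + v x)\<^sup>2 \<le> 2 * (u x)\<^sup>2 + 2 * (v x)\<^sup>2" for x
    using sum_squares_bound[of "u x" "v x"] by (simp add: power2_sum)
  then show "AE x in M. norm ((u x + v x)\<^sup>2) \<le> norm (2 * (u x)\<^sup>2 + 2 * (v x)\<^sup>2)"
    by simp
qed simp

lemma integrable_square_diff:
  fixes u v :: "'a \<Rightarrow> real"
  assumes [measurable]: "u \<in> borel_measurable M" "v \<in> borel_measurable M"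
    and "integrable M (\<lambda>x. (u x)\<^sup>2)" "integrable M (\<lambda>x. (v x)\<^sup>2)"
  shows "integrable M (\<lambda>x. (u x - v x)\<^sup>2)"
  using integrable_square_add[of u M "\<lambda>x. - v x"] assms by simp

lemma integrable_mult_if_square_integrable:
  fixes u v :: "'a \<Rightarrow> real"
  assumes [measurable]: "u \<in> borel_measurable M" "v \<in> borel_measurable M"
    and "integrable M (\<lambda>x. (u x)\<^sup>2)" "integrable M (\<lambda>x. (v x)\<^sup>2)"
  shows "integrable M (\<lambda>x. u x * v x)"
proof (rule Bochner_Integration.integrable_bound)
  show "integrable M (\<lambda>x. ((u x)\<^sup>2 + (v x)\<^sup>2) / 2)" using assms(3,4) by simp
  have "\<bar>u x * v x\<bar> \<le> ((u x)\<^sup>2 + (v x)\<^sup>2) / 2" for x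
    using sum_squares_bound[of "\<bar>u x\<bar>" "\<bar>v x\<bar>"] by (simp add: abs_mult)
  then show "AE x in M. norm (u x * v x) \<le> norm (((u x)\<^sup>2 + (v x)\<^sup>2) / 2)"
    by simp
qed simp

lemma product_error_bound:
  fixes f1 f0 h1 h0 \<theta> s :: real
  assumes s: "0 < s"
  shows "\<bar>(f1 - f0 - h1 + h0) * (h1 - h0 - \<theta>)\<bar>
     \<le> (2 + 1 / (2 * s)) * ((h1 - f1)\<^sup>2 + (h0 - f0)\<^sup>2) + s * (f1 - f0 - \<theta>)\<^sup>2"
proof -
  define D where "D = (h1 - f1) - (h0 - f0)"
  define c where "c = f1 - f0 - \<theta>"
  have "(f1 - f0 - h1 + h0) * (h1 - h0 - \<theta>) = - (D\<^sup>2 + D * c)"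
    unfolding D_def c_def by (simp add: power2_eq_square algebra_simps)
  then have "\<bar>(f1 - f0 - h1 + h0) * (h1 - h0 - \<theta>)\<bar> \<le> D\<^sup>2 + \<bar>D * c\<bar>"
    using abs_triangle_ineq[of "D\<^sup>2" "D * c"] by simp
  also have "\<bar>D * c\<bar> \<le> D\<^sup>2 / (4 * s) + s * c\<^sup>2"
    using sum_squares_bound[of "\<bar>D\<bar> / (2 * sqrt s)" "sqrt s * \<bar>c\<bar>"] s
    by (simp add: power_divide power_mult_distrib abs_mult)
  then have "D\<^sup>2 + \<bar>D * c\<bar> \<le> (1 + 1 / (4 * s)) * D\<^sup>2 + s * c\<^sup>2"
    by (simp add: field_simps)
  also have "\<dots> \<le> (1 + 1 / (4 * s)) * (2 * ((h1 - f1)\<^sup>2 + (h0 - f0)\<^sup>2)) + s * c\<^sup>2"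
  proof -
    have "(u - v)\<^sup>2 \<le> 2 * (u\<^sup>2 + v\<^sup>2)" for u v :: real
      using sum_squares_bound[of u "- v"] by (simp add: power2_diff)
    then show ?thesis
      using s unfolding D_def by (intro add_right_mono mult_left_mono) simp_all
  qed
  finally show ?thesis
    using s by (simp add: c_def field_simps)
qed

lemma l2norm_square: "(l2norm P g)\<^sup>2 = (\<integral>x. (g x)\<^sup>2 \<partial>P)"
  by (simp add: l2norm_def)

lemma integral_product_error_bound:
  fixes f h :: "bool \<Rightarrow> 'x \<Rightarrow> real" and \<theta> s :: real
  assumes "finite_measure P"
    and [measurable]: "\<And>a. f a \<in> borel_measurable P" "\<And>a. h a \<in> borel_measurable P"
    and f_sq: "\<And>a. integrable P (\<lambda>x. (f a x)\<^sup>2)" and h_sq: "\<And>a. integrable P (\<lambda>x. (h a x)\<^sup>2)"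
    and s: "0 < s"
  shows "\<bar>\<integral>x. (f True x - f False x - h True x + h False x) * (h True x - h False x - \<theta>) \<partial>P\<bar>
    \<le> (2 + 1 / (2 * s)) * (\<Sum>a\<in>UNIV. (l2norm P (\<lambda>x. h a x - f a x))\<^sup>2)
       + s * (l2norm P (\<lambda>x. f True x - f False x - \<theta>))\<^sup>2"
proof -
  interpret finite_measure P by fact
  have err_sq: "integrable P (\<lambda>x. (h a x - f a x)\<^sup>2)" for a
    by (intro integrable_square_diff f_sq h_sq) simp_all
  have gap_sq: "integrable P (\<lambda>x. (f True x - f False x - \<theta>)\<^sup>2)"
    by (intro integrable_square_diff f_sq) simp_all
  have "\<bar>\<integral>x. (f True x - f False x - h True x + h False x) * (h True x - h False x - \<theta>) \<partial>P\<bar>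
      \<le> (\<integral>x. \<bar>(f True x - f False x - h True x + h False x) * (h True x - h False x - \<theta>)\<bar> \<partial>P)"
    by (rule integral_abs_bound)
  also have "\<dots> \<le> (\<integral>x. (2 + 1 / (2 * s)) * ((h True x - f True x)\<^sup>2 + (h False x - f False x)\<^sup>2)
                        + s * (f True x - f False x - \<theta>)\<^sup>2 \<partial>P)"
    using err_sq gap_sq product_error_bound[OF s] s
    by (intro integral_mono') (simp_all add: add_nonneg_nonneg)
  also have "\<dots> = (2 + 1 / (2 * s)) * (\<Sum>a\<in>UNIV. (l2norm P (\<lambda>x. h a x - f a x))\<^sup>2)
                   + s * (l2norm P (\<lambda>x. f True x - f False x - \<theta>))\<^sup>2"
    using err_sq gap_sq by (simp add: l2norm_square UNIV_bool add.commute)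
  finally show ?thesis .
qed

lemma (in prob_space) cond_exp_product_error_bound:
  fixes f :: "bool \<Rightarrow> 'x \<Rightarrow> real" and h :: "'a \<Rightarrow> bool \<Rightarrow> 'x \<Rightarrow> real"
  assumes H: "subalgebra M H" and Z[measurable]: "Z \<in> M \<rightarrow>\<^sub>M N"
    and ind: "indep_set (sets H) (preimgs M N Z)"
    and f[measurable]: "\<And>a. f a \<in> borel_measurable N"
    and f_sq: "\<And>a. integrable (distr M N Z) (\<lambda>z. (f a z)\<^sup>2)"
    and h: "\<And>a. (\<lambda>(x, z). h x a z) \<in> borel_measurable (H \<Otimes>\<^sub>M N)"
    and h_sq: "\<And>a. integrable M (\<lambda>x. (h x a (Z x))\<^sup>2)"
    and s: "0 < s"
  shows "AE x in M. \<bar>real_cond_exp M H (\<lambda>x.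
            (f True (Z x) - f False (Z x) - h x True (Z x) + h x False (Z x))
            * (h x True (Z x) - h x False (Z x) - \<theta>)) x\<bar>
    \<le> (2 + 1 / (2 * s)) * (\<Sum>a\<in>UNIV. (l2norm (distr M N Z) (\<lambda>z. h x a z - f a z))\<^sup>2)
       + s * (l2norm (distr M N Z) (\<lambda>z. f True z - f False z - \<theta>))\<^sup>2"
proof -
  interpret PN: prob_space "distr M N Z" by (rule prob_space_distr[OF Z])
  have [measurable]: "(\<lambda>p. h (fst p) a (snd p)) \<in> borel_measurable (H \<Otimes>\<^sub>M N)" for a
    using h[of a] by (simp add: case_prod_unfold)
  have pm[measurable]: "(\<lambda>x. (x, Z x)) \<in> M \<rightarrow>\<^sub>M H \<Otimes>\<^sub>M N"
    by (rule measurable_Pair[OF measurable_id_subalgebra[OF H] Z])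
  have hZ[measurable]: "(\<lambda>x. h x a (Z x)) \<in> borel_measurable M" for a
    using measurable_compose[OF pm h[of a]] by simp
  have fZ_sq: "integrable M (\<lambda>x. (f a (Z x))\<^sup>2)" for a
    using f_sq[of a] by (subst (asm) integrable_distr_eq) simp_all
  define g where "g x z = (f True z - f False z - h x True z + h x False z)
                           * (h x True z - h x False z - \<theta>)" for x z
  have "(\<lambda>(x, z). g x z) \<in> borel_measurable (H \<Otimes>\<^sub>M N)"
    unfolding g_def case_prod_unfold by measurable
  moreover have "integrable M (\<lambda>x. g x (Z x))"
    unfolding g_def
    by (intro integrable_mult_if_square_integrable integrable_square_add integrable_square_diff
        fZ_sq h_sq) simp_all
  ultimately have cond_exp: "AE x in M. real_cond_exp M H (\<lambda>x. g x (Z x)) x = (\<integral>z. g x z \<partial>distr M N Z)"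
    by (rule real_cond_exp_indep_eq_integral(1)[OF H Z ind])
  have h_sq_distr: "AE x in M. integrable (distr M N Z) (\<lambda>z. (h x a z)\<^sup>2)" for a
    using real_cond_exp_indep_eq_integral(2)[OF H Z ind, of "\<lambda>x z. (h x a z)\<^sup>2"] h_sq[of a]
    by (simp add: case_prod_unfold)
  show ?thesis
    using AE_space cond_exp h_sq_distr[of True] h_sq_distr[of False]
  proof eventually_elim
    case (elim x)
    have "x \<in> space H" using elim(1) H by (simp add: subalgebra_def)
    then have "h x a \<in> borel_measurable (distr M N Z)" for a
      using measurable_Pair2[OF h[of a]] by simp
    moreover have "integrable (distr M N Z) (\<lambda>z. (h x a z)\<^sup>2)" for a
      using elim by (cases a) simp_all
    ultimately show ?case
      using integral_product_error_bound[where f = f and h = "h x" and \<theta> = \<theta>,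
          OF PN.finite_measure_axioms _ _ f_sq _ s] elim(2)
      by (simp add: g_def)
  qed
qed

lemma conv_in_prob_Suc_iff:
  "conv_in_prob M Z \<longleftrightarrow> Z 0 \<in> borel_measurable M \<and> conv_in_prob M (\<lambda>t. Z (Suc t))"
proof -
  have "(\<forall>t. Z t \<in> borel_measurable M)
      \<longleftrightarrow> Z 0 \<in> borel_measurable M \<and> (\<forall>t. Z (Suc t) \<in> borel_measurable M)"
    by (auto intro: nat.induct)
  moreover have "(\<lambda>t. measure M {x \<in> space M. e < \<bar>Z (Suc t) x\<bar>}) \<longlonglongrightarrow> 0
      \<longleftrightarrow> (\<lambda>t. measure M {x \<in> space M. e < \<bar>Z t x\<bar>}) \<longlonglongrightarrow> 0" for e
    using filterlim_sequentially_Suc[of "\<lambda>t. measure M {x \<in> space M. e < \<bar>Z t x\<bar>}"] by simp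
  ultimately show ?thesis
    unfolding conv_in_prob_def by simp
qed

lemma conv_in_prob_cmult:
  assumes Z: "conv_in_prob M Z"
  shows "conv_in_prob M (\<lambda>t x. c * Z t x)"
proof (cases "c = 0")
  case False
  have [measurable]: "Z t \<in> borel_measurable M" for t
    using Z by (simp add: conv_in_prob_def)
  have "{x \<in> space M. e < \<bar>c * Z t x\<bar>} = {x \<in> space M. e / \<bar>c\<bar> < \<bar>Z t x\<bar>}" for e t
    using False by (auto simp: abs_mult field_simps)
  then show ?thesis
    using Z False by (simp add: conv_in_prob_def)
qed (simp add: conv_in_prob_def)

lemma conv_in_prob_if_scaled:
  assumes "prob_space M" and scaled: "conv_in_prob M (\<lambda>t x. c t * Z t x)" and c: "\<And>t. 1 \<le> c t"
  shows "conv_in_prob M Z"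
proof -
  interpret prob_space M by fact
  have [measurable]: "(\<lambda>x. c t * Z t x) \<in> borel_measurable M" for t
    using scaled by (simp add: conv_in_prob_def)
  have Z: "Z t \<in> borel_measurable M" for t
  proof -
    have "Z t = (\<lambda>x. (c t * Z t x) / c t)"
      using c[of t] by (auto simp: fun_eq_iff)
    also have "\<dots> \<in> borel_measurable M" by measurable
    finally show ?thesis .
  qed
  have le: "\<bar>Z t x\<bar> \<le> \<bar>c t * Z t x\<bar>" for t x
    using mult_right_mono[OF c[of t], of "\<bar>Z t x\<bar>"] c[of t] by (simp add: abs_mult)
  have "(\<lambda>t. measure M {x \<in> space M. e < \<bar>Z t x\<bar>}) \<longlonglongrightarrow> 0" if "0 < e" for e
  proof -
    have lim: "(\<lambda>t. measure M {x \<in> space M. e < \<bar>c t * Z t x\<bar>}) \<longlonglongrightarrow> 0"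
      using scaled that by (simp add: conv_in_prob_def)
    have "{x \<in> space M. e < \<bar>Z t x\<bar>} \<subseteq> {x \<in> space M. e < \<bar>c t * Z t x\<bar>}" for t
      using order_less_le_trans[OF _ le] by blast
    then have "measure M {x \<in> space M. e < \<bar>Z t x\<bar>} \<le> measure M {x \<in> space M. e < \<bar>c t * Z t x\<bar>}" for t
      by (rule finite_measure_mono) measurable
    then show ?thesis
      by (intro tendsto_sandwich[OF _ _ tendsto_const lim]) (simp_all add: always_eventually)
  qed
  with Z show ?thesis unfolding conv_in_prob_def by blast
qed

lemma conv_in_prob_if_dominated:
  fixes R :: "'i::finite \<Rightarrow> nat \<Rightarrow> 'a \<Rightarrow> real" and K :: "real \<Rightarrow> real"
  assumes "prob_space M" and R: "\<And>i. conv_in_prob M (R i)"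
    and Z: "\<And>t. Z t \<in> borel_measurable M"
    and dominated: "\<And>s t. 0 < s \<Longrightarrow> AE x in M. \<bar>Z t x\<bar> \<le> K s * (\<Sum>i\<in>UNIV. (R i t x)\<^sup>2) + s * C"
  shows "conv_in_prob M Z"
  unfolding conv_in_prob_def
proof (intro conjI allI impI Z)
  interpret prob_space M by fact
  have [measurable]: "R i t \<in> borel_measurable M" for i t
    using R by (simp add: conv_in_prob_def)
  fix e :: real assume e: "0 < e"
  define s where "s = e / (2 * (\<bar>C\<bar> + 1))"
  have s: "0 < s" "s * C < e / 2"
    using e by (auto simp: s_def field_simps abs_if split: if_splits)
  have Kn: "0 < (\<bar>K s\<bar> + 1) * CARD('i)" by simp
  define \<delta> where "\<delta> = min 1 (e / (2 * ((\<bar>K s\<bar> + 1) * CARD('i))))"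
  have \<delta>: "0 < \<delta>" "\<delta> \<le> 1" "(\<bar>K s\<bar> + 1) * (CARD('i) * \<delta>) \<le> e / 2"
  proof -
    show "0 < \<delta>" "\<delta> \<le> 1" using e Kn by (simp_all add: \<delta>_def)
    have "\<delta> \<le> e / (2 * ((\<bar>K s\<bar> + 1) * CARD('i)))" by (simp add: \<delta>_def)
    then show "(\<bar>K s\<bar> + 1) * (CARD('i) * \<delta>) \<le> e / 2"
      using Kn by (simp add: field_simps)
  qed
  have escape: "\<exists>i. \<delta> < \<bar>R i t x\<bar>"
    if Z_le: "\<bar>Z t x\<bar> \<le> K s * (\<Sum>i\<in>UNIV. (R i t x)\<^sup>2) + s * C" and Z_gt: "e < \<bar>Z t x\<bar>" for t x
  proof (rule ccontr)
    assume "\<nexists>i. \<delta> < \<bar>R i t x\<bar>"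
    then have "(R i t x)\<^sup>2 \<le> \<delta>\<^sup>2" for i
      using \<delta>(1) by (simp add: abs_le_square_iff[symmetric] not_less)
    also have "\<delta>\<^sup>2 \<le> \<delta>"
      using \<delta>(1,2) by (simp add: power2_eq_square mult_left_le_one_le)
    finally have "(\<Sum>i\<in>UNIV. (R i t x)\<^sup>2) \<le> CARD('i) * \<delta>"
      using sum_mono[of UNIV "\<lambda>i. (R i t x)\<^sup>2" "\<lambda>_. \<delta>"] by simp
    moreover have "0 \<le> (\<Sum>i\<in>UNIV. (R i t x)\<^sup>2)" by (simp add: sum_nonneg)
    ultimately have "K s * (\<Sum>i\<in>UNIV. (R i t x)\<^sup>2) \<le> (\<bar>K s\<bar> + 1) * (CARD('i) * \<delta>)"
      by (smt (verit, best) mult_mono mult_right_mono abs_ge_self)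
    then show False using Z_le Z_gt \<delta>(3) s(2) by linarith
  qed
  have "AE x in M. x \<in> {x \<in> space M. e < \<bar>Z t x\<bar>} \<longrightarrow> x \<in> (\<Union>i. {x \<in> space M. \<delta> < \<bar>R i t x\<bar>})" for t
    using dominated[OF s(1), of t] by eventually_elim (auto dest: escape)
  then have "measure M {x \<in> space M. e < \<bar>Z t x\<bar>} \<le> measure M (\<Union>i. {x \<in> space M. \<delta> < \<bar>R i t x\<bar>})" for t
    by (rule finite_measure_mono_AE) measurable
  also have "\<dots> t \<le> (\<Sum>i\<in>UNIV. measure M {x \<in> space M. \<delta> < \<bar>R i t x\<bar>})" for t
    by (rule measure_UNION_le) measurable
  finally have le: "measure M {x \<in> space M. e < \<bar>Z t x\<bar>} \<le> (\<Sum>i\<in>UNIV. measure M {x \<in> space M. \<delta> < \<bar>R i t x\<bar>})"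
    for t .
  have lim: "(\<lambda>t. \<Sum>i\<in>UNIV. measure M {x \<in> space M. \<delta> < \<bar>R i t x\<bar>}) \<longlonglongrightarrow> 0"
    using R \<delta>(1) by (intro tendsto_null_sum) (simp add: conv_in_prob_def)
  show "(\<lambda>t. measure M {x \<in> space M. e < \<bar>Z t x\<bar>}) \<longlonglongrightarrow> 0"
    by (rule tendsto_sandwich[OF _ _ tendsto_const lim]) (auto intro: always_eventually le)
qed

lemma trunc_bounds:
  assumes "2 \<le> k"
  shows "1 / k \<le> trunc k p" "trunc k p \<le> 1 - 1 / k"
proof -
  have "1 / k \<le> 1 / 2" using assms by (intro divide_left_mono) auto
  then show "1 / k \<le> trunc k p" "trunc k p \<le> 1 - 1 / k" unfolding trunc_def by auto
qed

lemma subalgebra_hist: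
  assumes "\<And>s. 1 \<le> s \<Longrightarrow> X s \<in> M \<rightarrow>\<^sub>M MX" "\<And>s. 1 \<le> s \<Longrightarrow> A s \<in> M \<rightarrow>\<^sub>M count_space UNIV"
    and "\<And>s. 1 \<le> s \<Longrightarrow> Y0 s \<in> borel_measurable M" "\<And>s. 1 \<le> s \<Longrightarrow> Y1 s \<in> borel_measurable M"
  shows "subalgebra M (hist M MX X A Y0 Y1 t)"
  unfolding hist_def
proof (rule subalgebra_sigma, intro subsetI)
  fix E assume "E \<in> (\<Union>s\<in>{1..t}. preimgs M MX (X s) \<union> preimgs M (count_space UNIV) (A s)
                                    \<union> preimgs M borel (yobs A Y0 Y1 s))"
  then obtain s where "1 \<le> s" and E: "E \<in> preimgs M MX (X s) \<union> preimgs M (count_space UNIV) (A s)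
                                    \<union> preimgs M borel (yobs A Y0 Y1 s)"
    by auto
  then have [measurable]: "X s \<in> M \<rightarrow>\<^sub>M MX" "A s \<in> M \<rightarrow>\<^sub>M count_space UNIV"
    "Y0 s \<in> borel_measurable M" "Y1 s \<in> borel_measurable M"
    using assms by simp_all
  have [measurable]: "yobs A Y0 Y1 s \<in> borel_measurable M"
    unfolding yobs_def[abs_def] by measurable
  from E show "E \<in> sets M" unfolding preimgs_def by auto
qed

lemma subalgebra_propalg:
  assumes hist: "subalgebra M (hist M MX X A Y0 Y1 (t - 1))" and "X t \<in> M \<rightarrow>\<^sub>M MX"
    and Y0: "Y0 t \<in> borel_measurable M" and Y1: "Y1 t \<in> borel_measurable M"
  shows "subalgebra M (propalg M MX X A Y0 Y1 t)"
    and "Y0 t \<in> borel_measurable (propalg M MX X A Y0 Y1 t)"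
    and "Y1 t \<in> borel_measurable (propalg M MX X A Y0 Y1 t)"
proof -
  let ?G = "sets (hist M MX X A Y0 Y1 (t - 1)) \<union> preimgs M MX (X t)
       \<union> preimgs M borel (Y0 t) \<union> preimgs M borel (Y1 t)"
  have G: "?G \<subseteq> sets M"
    using hist assms(2) Y0 Y1 by (auto simp: subalgebra_def preimgs_def)
  then show "subalgebra M (propalg M MX X A Y0 Y1 t)"
    unfolding propalg_def by (rule subalgebra_sigma)
  have Pow: "?G \<subseteq> Pow (space M)" using G sets.sets_into_space by blast
  show "Y0 t \<in> borel_measurable (propalg M MX X A Y0 Y1 t)"
    unfolding propalg_def by (rule measurable_sigma_preimgs[OF Y0 _ Pow]) blast
  show "Y1 t \<in> borel_measurable (propalg M MX X A Y0 Y1 t)"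
    unfolding propalg_def by (rule measurable_sigma_preimgs[OF Y1 _ Pow]) blast
qed

lemma integrable_square_outcome_regression:
  assumes M: "prob_space M" and X[measurable]: "X 1 \<in> M \<rightarrow>\<^sub>M MX"
    and A: "A 1 \<in> M \<rightarrow>\<^sub>M count_space UNIV"
    and Y[measurable]: "Y0 1 \<in> borel_measurable M" "Y1 1 \<in> borel_measurable M"
    and k: "2 \<le> k" and propensity: "AE \<omega> in M.
          real_cond_exp M (propalg M MX X A Y0 Y1 1) (\<lambda>\<omega>. if A 1 \<omega> then 1 else 0) \<omega>
          = trunc k (p \<omega>)"
    and f: "f \<in> borel_measurable MX"
    and regression: "AE \<omega> in M.
          real_cond_exp M (vimage_algebra (space M) (X 1) MX) (ypot Y0 Y1 a 1) \<omega> = f (X 1 \<omega>)"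
    and var_Y: "integrable M (\<lambda>\<omega>. (yobs A Y0 Y1 1 \<omega>)\<^sup>2)"
  shows "integrable (distr M MX (X 1)) (\<lambda>x. (f x)\<^sup>2)"
proof -
  interpret prob_space M by (rule M)
  have "subalgebra M (hist M MX X A Y0 Y1 (1 - 1))"
    by (simp add: hist_def subalgebra_sigma)
  note propalg = subalgebra_propalg[OF this X Y]
  have "AE \<omega> in M. 1 / k \<le> real_cond_exp M (propalg M MX X A Y0 Y1 1) (\<lambda>\<omega>. if A 1 \<omega> then 1 else 0) \<omega>
      \<and> real_cond_exp M (propalg M MX X A Y0 Y1 1) (\<lambda>\<omega>. if A 1 \<omega> then 1 else 0) \<omega> \<le> 1 - 1 / k"
    using propensity by eventually_elim (simp add: trunc_bounds[OF k])
  moreover have "0 < 1 / k" using k by simp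
  ultimately have "integrable M (\<lambda>\<omega>. (Y0 1 \<omega>)\<^sup>2)" "integrable M (\<lambda>\<omega>. (Y1 1 \<omega>)\<^sup>2)"
    using integrable_square_potential_outcomes[OF propalg A] var_Y[unfolded yobs_def] by blast+
  then have "integrable M (\<lambda>\<omega>. (ypot Y0 Y1 a 1 \<omega>)\<^sup>2)"
    by (cases a) (simp_all add: ypot_def)
  moreover have "ypot Y0 Y1 a 1 \<in> borel_measurable M"
    using Y by (cases a) (simp_all add: ypot_def[abs_def])
  ultimately show ?thesis
    using integrable_square_regression[OF X f _ _ regression] by blast
qed

theorem lemma2:
  fixes M :: "'a measure" and MX :: "'x measure"
    and X :: "nat \<Rightarrow> 'a \<Rightarrow> 'x" and Y0 Y1 :: "nat \<Rightarrow> 'a \<Rightarrow> real"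
    and A :: "nat \<Rightarrow> 'a \<Rightarrow> bool"
    and pit :: "nat \<Rightarrow> 'a \<Rightarrow> 'x \<Rightarrow> real" and k :: "nat \<Rightarrow> real"
    and f v :: "bool \<Rightarrow> 'x \<Rightarrow> real"
    and fhat :: "nat \<Rightarrow> 'a \<Rightarrow> bool \<Rightarrow> 'x \<Rightarrow> real"
    and pilim :: "'x \<Rightarrow> real" and C1 :: real
  assumes M: "prob_space M"
    and meas_X: "\<And>t. t \<ge> 1 \<Longrightarrow> X t \<in> M \<rightarrow>\<^sub>M MX"
    and meas_Y0: "\<And>t. t \<ge> 1 \<Longrightarrow> Y0 t \<in> borel_measurable M"
    and meas_Y1: "\<And>t. t \<ge> 1 \<Longrightarrow> Y1 t \<in> borel_measurable M"
    and meas_A: "\<And>t. t \<ge> 1 \<Longrightarrow> A t \<in> M \<rightarrow>\<^sub>M count_space UNIV"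
    and indep: "prob_space.indep_vars M (\<lambda>_. MX \<Otimes>\<^sub>M borel \<Otimes>\<^sub>M borel)
                  (\<lambda>t \<omega>. (X t \<omega>, Y0 t \<omega>, Y1 t \<omega>)) {1..}"
    and ident: "\<And>t. t \<ge> 1 \<Longrightarrow>
                  distr M (MX \<Otimes>\<^sub>M borel \<Otimes>\<^sub>M borel) (\<lambda>\<omega>. (X t \<omega>, Y0 t \<omega>, Y1 t \<omega>))
                  = distr M (MX \<Otimes>\<^sub>M borel \<Otimes>\<^sub>M borel) (\<lambda>\<omega>. (X 1 \<omega>, Y0 1 \<omega>, Y1 1 \<omega>))"
    and indep_hist: "\<And>t. t \<ge> 1 \<Longrightarrow>
                  prob_space.indep_set M (sets (hist M MX X A Y0 Y1 (t - 1)))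
                    (preimgs M (MX \<Otimes>\<^sub>M borel \<Otimes>\<^sub>M borel) (\<lambda>\<omega>. (X t \<omega>, Y0 t \<omega>, Y1 t \<omega>)))"
    and k_ge: "\<And>t. t \<ge> 1 \<Longrightarrow> 2 \<le> k t"
    and pit_range: "\<And>t \<omega> x. t \<ge> 1 \<Longrightarrow> 0 < pit t \<omega> x \<and> pit t \<omega> x < 1"
    and pit_meas: "\<And>t. t \<ge> 1 \<Longrightarrow>
                  (\<lambda>(\<omega>, x). pit t \<omega> x) \<in> borel_measurable (hist M MX X A Y0 Y1 (t - 1) \<Otimes>\<^sub>M MX)"
    and propensity: "\<And>t. t \<ge> 1 \<Longrightarrow> AE \<omega> in M.
                  real_cond_exp M (propalg M MX X A Y0 Y1 t) (\<lambda>\<omega>. if A t \<omega> then 1 else 0) \<omega>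
                  = trunc (k t) (pit t \<omega> (X t \<omega>))"
    and f_meas: "\<And>a. f a \<in> borel_measurable MX"
    and f_def: "\<And>a t. t \<ge> 1 \<Longrightarrow> AE \<omega> in M.
                  real_cond_exp M (vimage_algebra (space M) (X t) MX) (ypot Y0 Y1 a t) \<omega> = f a (X t \<omega>)"
    and v_meas: "\<And>a. v a \<in> borel_measurable MX"
    and v_nonneg: "\<And>a x. x \<in> space MX \<Longrightarrow> 0 \<le> v a x"
    and v_def: "\<And>a t. t \<ge> 1 \<Longrightarrow> AE \<omega> in M.
                  nn_cond_exp M (vimage_algebra (space M) (X t) MX)
                    (\<lambda>\<omega>. ennreal ((ypot Y0 Y1 a t \<omega> - f a (X t \<omega>))\<^sup>2)) \<omega> = ennreal (v a (X t \<omega>))"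
    and var_Y: "\<And>t. t \<ge> 1 \<Longrightarrow> integrable M (\<lambda>\<omega>. (yobs A Y0 Y1 t \<omega>)\<^sup>2)"
    and fhat_meas: "\<And>t a. (\<lambda>(\<omega>, x). fhat t \<omega> a x) \<in> borel_measurable (hist M MX X A Y0 Y1 t \<Otimes>\<^sub>M MX)"
    and fhat_rate: "\<And>a. conv_in_prob M (\<lambda>t \<omega>. k (Suc t) *
                  l2norm (distr M MX (X 1)) (\<lambda>x. fhat (Suc t) \<omega> a x - f a x))"
    and pilim_meas: "pilim \<in> borel_measurable MX"
    and pilim_range: "\<And>x. x \<in> space MX \<Longrightarrow> 0 < pilim x \<and> pilim x < 1"
    and pi_rate: "conv_in_prob M (\<lambda>t \<omega>. k (Suc t) *
                  l2norm (distr M MX (X 1)) (\<lambda>x. trunc (k (Suc t)) (pit (Suc t) \<omega> x) - pilim x))"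
    and aipw_bound: "\<And>a x. x \<in> space MX \<Longrightarrow> 0 < aipw v a x \<and> 1 / aipw v a x < C1"
    and var_fhat: "\<And>a t. t \<ge> 1 \<Longrightarrow> integrable M (\<lambda>\<omega>. (fhat (t - 1) \<omega> a (X t \<omega>))\<^sup>2)"
  shows "conv_in_prob M (\<lambda>t \<omega>. 2 * real_cond_exp M (hist M MX X A Y0 Y1 t)
           (\<lambda>\<omega>. (f True (X (Suc t) \<omega>) - f False (X (Suc t) \<omega>)
                  - fhat t \<omega> True (X (Suc t) \<omega>) + fhat t \<omega> False (X (Suc t) \<omega>))
               * (fhat t \<omega> True (X (Suc t) \<omega>) - fhat t \<omega> False (X (Suc t) \<omega>)
                  - prob_space.expectation M (\<lambda>\<omega>. Y1 1 \<omega> - Y0 1 \<omega>))) \<omega>)"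
proof -
  interpret prob_space M by (rule M)
  define PX where "PX = distr M MX (X 1)"
  define \<theta> where "\<theta> = expectation (\<lambda>\<omega>. Y1 1 \<omega> - Y0 1 \<omega>)"
  define CE where "CE t = real_cond_exp M (hist M MX X A Y0 Y1 t)
           (\<lambda>\<omega>. (f True (X (Suc t) \<omega>) - f False (X (Suc t) \<omega>)
                  - fhat t \<omega> True (X (Suc t) \<omega>) + fhat t \<omega> False (X (Suc t) \<omega>))
               * (fhat t \<omega> True (X (Suc t) \<omega>) - fhat t \<omega> False (X (Suc t) \<omega>) - \<theta>))" for t
  \<comment> \<open>\<open>E a t\<close> is the error of \<open>fhat (Suc t)\<close>, which enters \<open>CE (Suc t)\<close>, so the argument runs
    on the shifted sequence.\<close>
  define E where "E a t \<omega> = l2norm PX (\<lambda>x. fhat (Suc t) \<omega> a x - f a x)" for a t \<omega>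
  have hist: "subalgebra M (hist M MX X A Y0 Y1 t)" for t
    by (rule subalgebra_hist[OF meas_X meas_A meas_Y0 meas_Y1])
  have triple: "(\<lambda>\<omega>. (X t \<omega>, Y0 t \<omega>, Y1 t \<omega>)) \<in> M \<rightarrow>\<^sub>M MX \<Otimes>\<^sub>M borel \<Otimes>\<^sub>M borel" if "1 \<le> t" for t
    using that by (intro measurable_Pair meas_X meas_Y0 meas_Y1)
  have distr_X: "distr M MX (X (Suc t)) = PX" for t
    using distr_distr[OF measurable_fst triple[of "Suc t"]] distr_distr[OF measurable_fst triple[of 1]]
      ident[of "Suc t"] by (simp add: PX_def comp_def)
  have indep_X: "indep_set (sets (hist M MX X A Y0 Y1 t)) (preimgs M MX (X (Suc t)))" for t
    using preimgs_comp_subset[OF triple measurable_fst, of "Suc t"] indep_hist[of "Suc t"]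
    unfolding indep_sets2_eq by auto
  have one: "1 \<le> (1::nat)" by simp
  have f_sq: "integrable PX (\<lambda>x. (f a x)\<^sup>2)" for a
    unfolding PX_def
    by (rule integrable_square_outcome_regression[OF M meas_X[OF one] meas_A[OF one] meas_Y0[OF one]
          meas_Y1[OF one] k_ge[OF one] propensity[OF one] f_meas f_def[OF one] var_Y[OF one]])
  have "1 \<le> k (Suc t)" for t
    using k_ge[of "Suc t"] by simp
  then have E_rate: "conv_in_prob M (E a)" for a
    unfolding E_def PX_def by (rule conv_in_prob_if_scaled[OF M fhat_rate[of a]])
  have dominated: "AE \<omega> in M. \<bar>CE (Suc t) \<omega>\<bar> \<le> (2 + 1 / (2 * s)) * (\<Sum>a\<in>UNIV. (E a t \<omega>)\<^sup>2)
      + s * (l2norm PX (\<lambda>x. f True x - f False x - \<theta>))\<^sup>2" if "0 < s" for s t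
  proof -
    have "X (Suc (Suc t)) \<in> M \<rightarrow>\<^sub>M MX" by (rule meas_X) simp
    moreover have "integrable M (\<lambda>\<omega>. (fhat (Suc t) \<omega> a (X (Suc (Suc t)) \<omega>))\<^sup>2)" for a
      using var_fhat[of "Suc (Suc t)" a] by simp
    moreover have "integrable (distr M MX (X (Suc (Suc t)))) (\<lambda>x. (f a x)\<^sup>2)" for a
      using f_sq by (simp add: distr_X)
    ultimately show ?thesis
      using cond_exp_product_error_bound[where f = f and h = "fhat (Suc t)" and \<theta> = \<theta>,
          OF hist _ indep_X f_meas _ fhat_meas _ that]
      by (simp add: CE_def E_def distr_X)
  qed
  have "conv_in_prob M (\<lambda>t. CE (Suc t))"
    by (rule conv_in_prob_if_dominated[OF M E_rate _ dominated]) (simp add: CE_def)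
  then have "conv_in_prob M CE"
    using conv_in_prob_Suc_iff[of M CE] by (simp add: CE_def)
  then show ?thesis
    unfolding CE_def \<theta>_def by (rule conv_in_prob_cmult)
qed

end
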